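(* Let $G$ be a finite simple connected graph of order $n$ and let $k\ge 2$ be an integer with $k\le n$. Then $W_{tsp,k}(G)\le 2W_k(G)$. Moreover, equality $W_{tsp,k}(G)=2W_k(G)$ holds if and only if one of the following holds: (i) $k=2$; (ii) $k=3$ and $G$ contains no three vertices $u,v,w$ such that $2\max\{d(u,v),d(u,w),d(v,w)\}<d(u,v)+d(u,w)+d(v,w)$ and every choice of three shortest paths between the three pairs $(u,v),(v,w),(w,u)$ consists of pairwise edge-disjoint paths; (iii) $k\ge 4$ and $G$ is a tree.
   Context: For vertices $u,v$, $d(u,v)$ is the graph distance. A walk is a sequence of vertices $(v_1,\dots,v_r)$ with $v_iv_{i+1}\in E(G)$; it is closed if $v_1=v_r$; its length is $r-1$ (the number of edge traversals, counted with multiplicity). For a set $S$ of $k$ vertices, $\mathrm{tsp}_k(S)$ is the length of a shortest closed walk in $G$ visiting all vertices of $S$, and the $k$-TSP-Wiener index is $W_{tsp,k}(G)=\sum_{S\subseteq V,\,|S|=k}\mathrm{tsp}_k(S)$. The Steiner distance $d_k(S)$ is the minimum number of edges of a connected subgraph (equivalently, a subtree) of $G$ containing all vertices of $S$, and the Steiner-Wiener index is $W_k(G)=\sum_{S\subseteq V,\,|S|=k}d_k(S)$. *)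

theory Defs
  imports Main
begin

definition simple_graph :: "'a set \<Rightarrow> 'a set set \<Rightarrow> bool" where
  "simple_graph V E \<longleftrightarrow> finite V \<and>
     (\<forall>e\<in>E. \<exists>u v. u \<in> V \<and> v \<in> V \<and> u \<noteq> v \<and> e = {u, v})"

definition walk_in :: "'a set \<Rightarrow> 'a set set \<Rightarrow> 'a list \<Rightarrow> bool" where
  "walk_in V E xs \<longleftrightarrow> xs \<noteq> [] \<and> set xs \<subseteq> V \<and>
     (\<forall>i. Suc i < length xs \<longrightarrow> {xs ! i, xs ! Suc i} \<in> E)"

definition walk_len :: "'a list \<Rightarrow> nat" where
  "walk_len xs = length xs - 1"

definition walk_edges :: "'a list \<Rightarrow> 'a set set" where
  "walk_edges xs = {{xs ! i, xs ! Suc i} | i. Suc i < length xs}"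

definition connected_graph :: "'a set \<Rightarrow> 'a set set \<Rightarrow> bool" where
  "connected_graph V E \<longleftrightarrow> V \<noteq> {} \<and>
     (\<forall>u\<in>V. \<forall>v\<in>V. \<exists>xs. walk_in V E xs \<and> hd xs = u \<and> last xs = v)"

definition dist :: "'a set \<Rightarrow> 'a set set \<Rightarrow> 'a \<Rightarrow> 'a \<Rightarrow> nat" where
  "dist V E u v = (LEAST l. \<exists>xs. walk_in V E xs \<and> hd xs = u \<and> last xs = v \<and> walk_len xs = l)"

definition shortest_path :: "'a set \<Rightarrow> 'a set set \<Rightarrow> 'a \<Rightarrow> 'a \<Rightarrow> 'a list \<Rightarrow> bool" where
  "shortest_path V E u v xs \<longleftrightarrow> walk_in V E xs \<and> hd xs = u \<and> last xs = v \<and>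
     walk_len xs = dist V E u v"

definition tsp :: "'a set \<Rightarrow> 'a set set \<Rightarrow> 'a set \<Rightarrow> nat" where
  "tsp V E S = (LEAST l. \<exists>xs. walk_in V E xs \<and> hd xs = last xs \<and> S \<subseteq> set xs \<and> walk_len xs = l)"

definition steiner_dist :: "'a set \<Rightarrow> 'a set set \<Rightarrow> 'a set \<Rightarrow> nat" where
  "steiner_dist V E S = (LEAST m. \<exists>H F. H \<subseteq> V \<and> S \<subseteq> H \<and> F \<subseteq> E \<and> (\<forall>e\<in>F. e \<subseteq> H) \<and>
      connected_graph H F \<and> card F = m)"

definition W_tsp :: "'a set \<Rightarrow> 'a set set \<Rightarrow> nat \<Rightarrow> nat" where
  "W_tsp V E k = (\<Sum>S\<in>{S. S \<subseteq> V \<and> card S = k}. tsp V E S)"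

definition W_steiner :: "'a set \<Rightarrow> 'a set set \<Rightarrow> nat \<Rightarrow> nat" where
  "W_steiner V E k = (\<Sum>S\<in>{S. S \<subseteq> V \<and> card S = k}. steiner_dist V E S)"

definition is_cycle :: "'a set \<Rightarrow> 'a set set \<Rightarrow> 'a list \<Rightarrow> bool" where
  "is_cycle V E xs \<longleftrightarrow> 3 \<le> length xs \<and> distinct xs \<and> walk_in V E (xs @ [hd xs])"

definition is_tree :: "'a set \<Rightarrow> 'a set set \<Rightarrow> bool" where
  "is_tree V E \<longleftrightarrow> connected_graph V E \<and> \<not> (\<exists>xs. is_cycle V E xs)"

end

theory Submission
  imports Defs
begin

(*
  A connected graph on h vertices has a closed walk through all of them of length 2(h - 1):
  add the vertices one at a time by out-and-back detours. For an optimal Steiner subgraph of S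
  this gives tsp(S) <= 2 d_k(S), so W_tsp,k <= 2 W_k, with equality iff tsp(S) = 2 d_k(S) for
  every k-set S.

  For two vertices both sides are 2 d(u,v); for three, tsp is the perimeter
  d(u,v) + d(v,w) + d(w,u). Call a triple deficient if its perimeter is less than twice its
  Steiner distance; degenerate triples (one side the sum of the other two) never are. If
  geodesics from a to b and from a to c share an edge, its endpoint y farther from a, at
  distance t >= 1, lies on both; replacing a by y lowers the perimeter by 2t and the Steiner
  distance by at most t, so the triple stays deficient. By descent, a deficient triple exists
  iff a nondegenerate one with pairwise edge-disjoint geodesics does. Conversely such a triple
  is deficient: otherwise a median x of an optimal Steiner tree makes all triangle inequalities
  through x tight, and splicing geodesics through x forces x to be one of the three vertices.

  For k >= 4, in a tree every edge of a closed walk is traversed at least twice, giving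
  equality. Otherwise let C be a shortest cycle. If |C| <= k its vertex set is deficient;
  otherwise so are three vertices cutting C into arcs shorter than |C|/2, since by minimality
  of C each arc is covered by geodesics from a median, and these are too short to cover all
  |C| edges. Padding with vertices of a closed walk, extended by detours where necessary,
  yields a deficient k-set.
*)

fun edge_list :: "'a list \<Rightarrow> 'a set list" where
  "edge_list (x # y # xs) = {x, y} # edge_list (y # xs)"
| "edge_list _ = []"

lemma length_edge_list: "length (edge_list xs) = length xs - 1"
  by (induction xs rule: edge_list.induct) auto

lemma nth_edge_list: "Suc i < length xs \<Longrightarrow> edge_list xs ! i = {xs ! i, xs ! Suc i}"
  by (induction xs arbitrary: i rule: edge_list.induct) (auto simp: nth_Cons split: nat.splits)

lemma set_edge_list: "set (edge_list xs) = walk_edges xs"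
  unfolding walk_edges_def
proof (auto simp: set_conv_nth length_edge_list nth_edge_list)
  fix i assume "Suc i < length xs"
  then show "\<exists>j. {xs ! i, xs ! Suc i} = edge_list xs ! j \<and> j < length xs - Suc 0"
    by (intro exI[of _ i]) (simp add: nth_edge_list)
qed

lemma walk_len_eq_length_edge_list: "walk_len xs = length (edge_list xs)"
  by (simp add: walk_len_def length_edge_list)

lemma walk_in_iff_edge_list:
  "walk_in V E xs \<longleftrightarrow> xs \<noteq> [] \<and> set xs \<subseteq> V \<and> set (edge_list xs) \<subseteq> E"
  unfolding walk_in_def set_edge_list walk_edges_def by auto

lemma edge_list_append_Cons:
  "edge_list (xs @ y # ys) =
     (if xs = [] then [] else edge_list xs @ [{last xs, y}]) @ edge_list (y # ys)"
  by (induction xs rule: edge_list.induct) auto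

lemma edge_list_join:
  assumes "xs \<noteq> []" "last xs = hd ys"
  shows "edge_list (xs @ tl ys) = edge_list xs @ edge_list ys"
  using assms by (cases ys rule: edge_list.cases) (auto simp: edge_list_append_Cons)

lemma edge_list_rev: "edge_list (rev xs) = rev (edge_list xs)"
  by (induction xs rule: edge_list.induct) (auto simp: edge_list_append_Cons insert_commute)

lemma edge_subset_walk: "e \<in> set (edge_list xs) \<Longrightarrow> e \<subseteq> set xs"
  by (induction xs rule: edge_list.induct) auto

lemma distinct_edge_list: "distinct xs \<Longrightarrow> distinct (edge_list xs)"
  by (induction xs rule: edge_list.induct) (auto dest: edge_subset_walk)

lemma card_edges_le_walk_len: "card (set (edge_list xs)) \<le> walk_len xs"
  by (simp add: walk_len_eq_length_edge_list card_length)

lemma card_edges_distinct_walk: "distinct xs \<Longrightarrow> card (set (edge_list xs)) = walk_len xs"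
  by (simp add: walk_len_eq_length_edge_list distinct_card distinct_edge_list)

lemma edge_list_take_drop:
  assumes "i < length xs"
  shows "edge_list xs = edge_list (take (Suc i) xs) @ edge_list (drop i xs)"
proof -
  have "last (take (Suc i) xs) = hd (drop i xs)"
    using assms by (simp add: take_Suc_conv_app_nth hd_drop_conv_nth)
  moreover have "take (Suc i) xs @ tl (drop i xs) = xs"
    by (metis append_take_drop_id drop_Suc tl_drop)
  moreover have "take (Suc i) xs \<noteq> []" using assms by (cases xs) auto
  ultimately show ?thesis using edge_list_join[of "take (Suc i) xs" "drop i xs"] by simp
qed

lemma edge_list_three_arcs:
  assumes "i \<le> j" "j < length xs"
  shows "edge_list xs =
    edge_list (take (Suc i) xs) @ edge_list (drop i (take (Suc j) xs)) @ edge_list (drop j xs)"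
proof -
  have "edge_list (take (Suc j) xs) =
      edge_list (take (Suc i) xs) @ edge_list (drop i (take (Suc j) xs))"
    using edge_list_take_drop[of i "take (Suc j) xs"] assms by (simp add: min_absorb1)
  then show ?thesis using edge_list_take_drop[OF assms(2)] by simp
qed

lemma edge_list_split:
  "edge_list xs = l1 @ e # l2 \<Longrightarrow>
     \<exists>A B. xs = A @ B \<and> A \<noteq> [] \<and> B \<noteq> [] \<and> edge_list A = l1 \<and> edge_list B = l2 \<and>
       e = {last A, hd B}"
proof (induction l1 arbitrary: xs)
  case Nil
  then obtain a b rest where "xs = a # b # rest" by (cases xs rule: edge_list.cases) auto
  then show ?case using Nil by (intro exI[of _ "[a]"] exI[of _ "b # rest"]) auto
next
  case (Cons c l1)
  then obtain a b rest where xs: "xs = a # b # rest" by (cases xs rule: edge_list.cases) auto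
  then have c: "c = {a, b}" "edge_list (b # rest) = l1 @ e # l2" using Cons.prems by auto
  then obtain A B where AB: "b # rest = A @ B" "A \<noteq> []" "B \<noteq> []" "edge_list A = l1"
    "edge_list B = l2" "e = {last A, hd B}"
    using Cons.IH by blast
  then obtain A' where "A = b # A'" by (cases A) auto
  then show ?case using AB xs c by (intro exI[of _ "a # A"] exI[of _ B]) auto
qed

lemma count_list_distinct: "distinct xs \<Longrightarrow> x \<in> set xs \<Longrightarrow> count_list xs x = 1"
  by (induction xs) (auto simp: count_list_0_iff)

lemma twice_card_set_le_length:
  assumes "\<forall>x\<in>set xs. 2 \<le> count_list xs x"
  shows "2 * card (set xs) \<le> length xs"
proof -
  have "2 * card (set xs) = (\<Sum>x\<in>set xs. 2)" by simp
  also have "\<dots> \<le> (\<Sum>x\<in>set xs. count_list xs x)" using assms by (intro sum_mono) auto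
  also have "\<dots> = length xs" by (rule sum_count_set) auto
  finally show ?thesis .
qed

lemma obtain_first_index:
  assumes "x \<in> set xs" "Q x"
  obtains i where "i < length xs" "Q (xs ! i)" "\<forall>j<i. \<not> Q (xs ! j)"
proof -
  obtain y where "find Q xs = Some y" using assms by (metis find_None_iff option.exhaust)
  then obtain i where "i < length xs" "Q (xs ! i)" "\<forall>j<i. \<not> Q (xs ! j)"
    by (auto simp: find_Some_iff)
  then show ?thesis by (rule that)
qed

lemma walk_join:
  assumes "walk_in V E xs" "walk_in V E ys" "last xs = hd ys"
  shows "walk_in V E (xs @ tl ys)" "hd (xs @ tl ys) = hd xs" "last (xs @ tl ys) = last ys"
    "edge_list (xs @ tl ys) = edge_list xs @ edge_list ys"
    "walk_len (xs @ tl ys) = walk_len xs + walk_len ys"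
proof -
  have ne: "xs \<noteq> []" "ys \<noteq> []" using assms walk_in_def by auto
  show edges: "edge_list (xs @ tl ys) = edge_list xs @ edge_list ys"
    using edge_list_join ne assms(3) by blast
  show "hd (xs @ tl ys) = hd xs" using ne by simp
  show "last (xs @ tl ys) = last ys" using ne assms(3) by (cases ys) (auto simp: last_append)
  show "walk_in V E (xs @ tl ys)" using assms ne edges
    unfolding walk_in_iff_edge_list by (auto dest: list.set_sel(2))
  show "walk_len (xs @ tl ys) = walk_len xs + walk_len ys"
    using edges by (simp add: walk_len_eq_length_edge_list)
qed

lemma walk_rev: "walk_in V E xs \<Longrightarrow> walk_in V E (rev xs)"
  by (simp add: walk_in_iff_edge_list edge_list_rev)

lemma walk_len_rev: "walk_len (rev xs) = walk_len xs"
  by (simp add: walk_len_def)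

lemma walk_mono: "walk_in H F xs \<Longrightarrow> H \<subseteq> V \<Longrightarrow> F \<subseteq> E \<Longrightarrow> walk_in V E xs"
  by (auto simp: walk_in_iff_edge_list)

lemma walk_hd_last_nth:
  assumes "walk_in V E xs"
  shows "hd xs = xs ! 0" "last xs = xs ! walk_len xs"
  using assms by (simp_all add: walk_in_def hd_conv_nth last_conv_nth walk_len_def)

lemma subwalk:
  assumes "walk_in V E xs" "i \<le> j" "j < length xs"
  defines "ys \<equiv> drop i (take (Suc j) xs)"
  shows "walk_in V E ys" "hd ys = xs ! i" "last ys = xs ! j" "set ys \<subseteq> set xs"
    "set (edge_list ys) \<subseteq> set (edge_list xs)" "walk_len ys = j - i"
proof -
  have len: "length ys = Suc j - i" using assms by (simp add: ys_def)
  have "edge_list xs = edge_list (take (Suc i) xs) @ edge_list ys @ edge_list (drop j xs)"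
    unfolding ys_def using edge_list_three_arcs assms(2,3) .
  then show edges: "set (edge_list ys) \<subseteq> set (edge_list xs)" by auto
  show verts: "set ys \<subseteq> set xs"
    unfolding ys_def by (meson set_drop_subset set_take_subset subset_trans)
  show "walk_in V E ys"
    using assms(1,2) edges verts len unfolding walk_in_iff_edge_list by auto
  show "hd ys = xs ! i" unfolding ys_def using assms(2,3) by (simp add: hd_drop_conv_nth)
  show "last ys = xs ! j" using len assms(2,3) by (simp add: ys_def last_conv_nth)
  show "walk_len ys = j - i" using len by (simp add: walk_len_def)
qed

lemma walk_to_path:
  assumes "walk_in V E xs"
  obtains ys where "walk_in V E ys" "hd ys = hd xs" "last ys = last xs" "distinct ys"
    "set (edge_list ys) \<subseteq> set (edge_list xs)" "length ys \<le> length xs"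
  using assms
proof (induction "length xs" arbitrary: xs rule: less_induct)
  case less
  show ?case
  proof (cases "distinct xs")
    case True then show ?thesis using less by blast
  next
    case False
    then obtain as bs cs y where xs: "xs = as @ [y] @ bs @ [y] @ cs"
      using not_distinct_decomp by blast
    define zs where "zs = as @ y # cs"
    have "edge_list (y # bs @ y # cs) = edge_list (y # bs) @ [{last (y # bs), y}] @ edge_list (y # cs)"
      using edge_list_append_Cons[of "y # bs" y cs] by simp
    then have "set (edge_list zs) \<subseteq> set (edge_list xs)" "set zs \<subseteq> set xs"
      unfolding zs_def xs by (auto simp: edge_list_append_Cons[of as])
    then have "walk_in V E zs" using less.prems(2) unfolding walk_in_iff_edge_list zs_def by auto
    moreover have "hd zs = hd xs" "last zs = last xs" unfolding zs_def xs by (cases as; simp)+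
    moreover have "length zs < length xs" unfolding zs_def xs by simp
    ultimately show ?thesis using less.hyps[of zs] less.prems(1)
      \<open>set (edge_list zs) \<subseteq> set (edge_list xs)\<close> by (metis dual_order.trans less_imp_le_nat)
  qed
qed

section \<open>Distances, Steiner subgraphs and spanning closed walks\<close>

lemma dist_le_walk_len: "walk_in V E xs \<Longrightarrow> dist V E (hd xs) (last xs) \<le> walk_len xs"
  unfolding dist_def by (rule Least_le) blast

lemma shortest_path_exists_walk:
  "walk_in V E xs \<Longrightarrow> \<exists>P. shortest_path V E (hd xs) (last xs) P"
  unfolding shortest_path_def dist_def by (rule LeastI_ex) blast

lemma shortest_pathD:
  assumes "shortest_path V E u v P"
  shows "walk_in V E P" "hd P = u" "last P = v" "walk_len P = dist V E u v"
  using assms by (simp_all add: shortest_path_def)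

lemma tsp_le_walk_len:
  "walk_in V E w \<Longrightarrow> hd w = last w \<Longrightarrow> S \<subseteq> set w \<Longrightarrow> tsp V E S \<le> walk_len w"
  unfolding tsp_def by (rule Least_le) blast

lemma steiner_dist_le:
  "H \<subseteq> V \<Longrightarrow> S \<subseteq> H \<Longrightarrow> F \<subseteq> E \<Longrightarrow> \<forall>e\<in>F. e \<subseteq> H \<Longrightarrow> connected_graph H F \<Longrightarrow>
   steiner_dist V E S \<le> card F"
  unfolding steiner_dist_def by (rule Least_le) blast

lemma connected_graph_walk: "walk_in V E xs \<Longrightarrow> connected_graph (set xs) (set (edge_list xs))"
proof -
  assume xs: "walk_in V E xs"
  then have self: "walk_in (set xs) (set (edge_list xs)) xs" by (auto simp: walk_in_iff_edge_list)
  have "\<exists>ys. walk_in (set xs) (set (edge_list xs)) ys \<and> hd ys = xs ! i \<and> last ys = xs ! j"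
    if "i \<le> j" "j < length xs" for i j
    using subwalk[OF self that] by blast
  then have "\<exists>ys. walk_in (set xs) (set (edge_list xs)) ys \<and> hd ys = xs ! i \<and> last ys = xs ! j"
    if "i < length xs" "j < length xs" for i j
    using that walk_rev by (metis hd_rev last_rev nat_le_linear)
  moreover have "set xs \<noteq> {}" using xs by (auto simp: walk_in_def)
  ultimately show ?thesis unfolding connected_graph_def by (metis in_set_conv_nth)
qed

lemma connected_graph_Un:
  assumes "connected_graph H1 F1" "connected_graph H2 F2" "z \<in> H1" "z \<in> H2"
  shows "connected_graph (H1 \<union> H2) (F1 \<union> F2)"
proof -
  have to_z: "\<exists>xs. walk_in (H1 \<union> H2) (F1 \<union> F2) xs \<and> hd xs = a \<and> last xs = z"
    if "a \<in> H1 \<union> H2" for a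
    using assms that walk_mono[of H1 F1 _ "H1 \<union> H2" "F1 \<union> F2"]
      walk_mono[of H2 F2 _ "H1 \<union> H2" "F1 \<union> F2"]
    unfolding connected_graph_def by (metis Un_iff sup_ge1 sup_ge2)
  have "\<exists>xs. walk_in (H1 \<union> H2) (F1 \<union> F2) xs \<and> hd xs = a \<and> last xs = b"
    if ab: "a \<in> H1 \<union> H2" "b \<in> H1 \<union> H2" for a b
  proof -
    obtain xs ys where xs: "walk_in (H1 \<union> H2) (F1 \<union> F2) xs" "hd xs = a" "last xs = z"
      and ys: "walk_in (H1 \<union> H2) (F1 \<union> F2) ys" "hd ys = b" "last ys = z"
      using to_z[OF ab(1)] to_z[OF ab(2)] by blast
    have "last xs = hd (rev ys)" using xs ys by (simp add: hd_rev)
    from walk_join[OF xs(1) walk_rev[OF ys(1)] this] show ?thesis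
      using xs ys by (metis last_rev)
  qed
  then show ?thesis using assms(3) unfolding connected_graph_def by blast
qed

lemma walk_first_hit:
  assumes "walk_in H F P" "last P \<in> set Q"
  obtains R where "walk_in H F R" "hd R = hd P" "last R \<in> set Q"
    "set (edge_list R) \<subseteq> set (edge_list P)" "set (edge_list R) \<inter> set (edge_list Q) = {}"
proof -
  have "last P \<in> set P" using assms(1) by (simp add: walk_in_def)
  then obtain i where i: "i < length P" "P ! i \<in> set Q" and before: "\<forall>j<i. P ! j \<notin> set Q"
    by (rule obtain_first_index[where Q = "\<lambda>x. x \<in> set Q"]) (use assms(2) in simp_all)
  define R where "R = take (Suc i) P"
  have R: "walk_in H F R" "hd R = hd P" "last R = P ! i"
    "set (edge_list R) \<subseteq> set (edge_list P)"
    using subwalk[OF assms(1), of 0 i] i walk_hd_last_nth[OF assms(1)] unfolding R_def by auto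
  \<comment> \<open>every edge of R has an endpoint strictly before position i, hence outside Q\<close>
  have "set (edge_list R) \<inter> set (edge_list Q) = {}"
  proof (rule ccontr)
    assume "set (edge_list R) \<inter> set (edge_list Q) \<noteq> {}"
    then obtain m where m: "m < length (edge_list R)" "edge_list R ! m \<in> set (edge_list Q)"
      by (metis disjoint_iff in_set_conv_nth)
    then have m: "Suc m < length R" "edge_list R ! m \<in> set (edge_list Q)"
      by (auto simp: length_edge_list)
    then have "R ! m \<in> set Q" using nth_edge_list[OF m(1)] edge_subset_walk by fastforce
    moreover have "R ! m = P ! m" "m < i" using m(1) i(1) unfolding R_def by auto
    ultimately show False using before by simp
  qed
  with R i(2) show ?thesis by (intro that) simp_all
qed

lemma walk_detour_new_vertex:
  assumes "connected_graph H F" "walk_in H F w" "\<not> H \<subseteq> set w"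
  obtains w' y e where "walk_in H F w'" "hd w' = hd w" "last w' = last w"
    "set w' = insert y (set w)" "y \<notin> set w" "walk_len w' = walk_len w + 2"
    "set (edge_list w') = insert e (set (edge_list w))" "e \<notin> set (edge_list w)"
proof -
  obtain z where z: "z \<in> H" "z \<notin> set w" using assms(3) by blast
  have w: "w \<noteq> []" "set w \<subseteq> H" using assms(2) by (auto simp: walk_in_def)
  then obtain P where P: "walk_in H F P" "hd P = hd w" "last P = z"
    using assms(1) z unfolding connected_graph_def by (meson hd_in_set subsetD)
  have P_ne: "P \<noteq> []" using P by (auto simp: walk_in_def)
  \<comment> \<open>P leaves the vertex set of w along the edge {x, y}; the detour x y x picks up y\<close>
  have "z \<in> set P" using P(3) P_ne last_in_set by blast
  then obtain i where i: "i < length P" "P ! i \<notin> set w" and before: "\<forall>j<i. P ! j \<in> set w"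
    by (rule obtain_first_index[where Q = "\<lambda>x. x \<notin> set w"]) (use z(2) in simp_all)
  have "P ! 0 \<in> set w" using P(2) P_ne w by (simp add: hd_conv_nth)
  then have "i \<noteq> 0" using i by metis
  define x where "x = P ! (i - 1)"
  define y where "y = P ! i"
  have x: "x \<in> set w" using before \<open>i \<noteq> 0\<close> unfolding x_def by (simp add: less_imp_diff_less)
  have y: "y \<notin> set w" "y \<in> H" using i P(1) unfolding y_def by (auto simp: walk_in_def)
  have xy: "{x, y} \<in> F" using P(1) i \<open>i \<noteq> 0\<close> unfolding walk_in_def x_def y_def
    by (metis Suc_pred' bot_nat_0.not_eq_extremum)
  obtain A B where w_split: "w = A @ x # B" using x split_list by metis
  define w' where "w' = A @ x # y # x # B"
  have edges: "set (edge_list w') = insert {x, y} (set (edge_list w))"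
    unfolding w'_def w_split by (auto simp: edge_list_append_Cons insert_commute)
  have "{x, y} \<notin> set (edge_list w)" using edge_subset_walk y(1) by blast
  moreover have "set w' = insert y (set w)" unfolding w'_def w_split by auto
  moreover have "walk_in H F w'"
    using assms(2) edges \<open>set w' = insert y (set w)\<close> y(2) xy
    unfolding walk_in_iff_edge_list w'_def by auto
  moreover have "hd w' = hd w" "last w' = last w"
    unfolding w'_def w_split by (cases A; simp; cases B; simp)+
  moreover have "walk_len w' = walk_len w + 2" unfolding w'_def w_split walk_len_def by simp
  ultimately show ?thesis using that edges y(1) by blast
qed

lemma walk_extend_vertices:
  assumes "connected_graph H F" "finite H" "walk_in H F w" "j \<le> card H - card (set w)"
  obtains w' where "walk_in H F w'" "hd w' = hd w" "last w' = last w"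
    "card (set w') = card (set w) + j" "walk_len w' = walk_len w + 2 * j"
    "card (set (edge_list w')) = card (set (edge_list w)) + j"
  using assms(4)
proof (induction j arbitrary: thesis)
  case 0
  show ?case using 0(1)[of w] assms(3) by simp
next
  case (Suc j)
  obtain w' where w': "walk_in H F w'" "hd w' = hd w" "last w' = last w"
    "card (set w') = card (set w) + j" "walk_len w' = walk_len w + 2 * j"
    "card (set (edge_list w')) = card (set (edge_list w)) + j"
    using Suc.IH Suc.prems(2) by (metis Suc_leD)
  have "\<not> H \<subseteq> set w'"
    using card_mono[OF List.finite_set, of H w'] Suc.prems(2) w'(4) by linarith
  then obtain w'' y e where "walk_in H F w''" "hd w'' = hd w'" "last w'' = last w'"
    "set w'' = insert y (set w')" "y \<notin> set w'" "walk_len w'' = walk_len w' + 2"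
    "set (edge_list w'') = insert e (set (edge_list w'))" "e \<notin> set (edge_list w')"
    by (rule walk_detour_new_vertex[OF assms(1) w'(1)])
  then show ?case using Suc.prems(1)[of w''] w' by auto
qed

lemma closed_walk_spanning:
  assumes "connected_graph H F" "finite H"
  obtains w where "walk_in H F w" "hd w = last w" "set w = H"
    "walk_len w = 2 * (card H - 1)" "card (set (edge_list w)) = card H - 1"
proof -
  obtain r where r: "r \<in> H" using assms(1) unfolding connected_graph_def by blast
  then have r_walk: "walk_in H F [r]" by (simp add: walk_in_def)
  have "card H - 1 \<le> card H - card (set [r])" by simp
  then obtain w where w: "walk_in H F w" "hd w = r" "last w = r"
    "card (set w) = 1 + (card H - 1)" "walk_len w = 2 * (card H - 1)"
    "card (set (edge_list w)) = card H - 1"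
    by (rule walk_extend_vertices[OF assms r_walk]) (simp_all add: walk_len_def)
  have "set w \<subseteq> H" using w by (auto simp: walk_in_def)
  moreover have "card H \<ge> 1" using r assms(2) by (metis card_0_eq empty_iff less_one not_le)
  ultimately have "set w = H" using w(4) assms(2) by (simp add: card_subset_eq)
  with w(1-3,5,6) show ?thesis by (intro that) simp_all
qed

lemma card_vertices_le_Suc_card_edges:
  assumes "connected_graph H F" "finite H" "finite F"
  shows "card H \<le> card F + 1"
proof -
  obtain w where "walk_in H F w" "card (set (edge_list w)) = card H - 1"
    by (rule closed_walk_spanning[OF assms(1,2)])
  moreover from this have "set (edge_list w) \<subseteq> F" by (auto simp: walk_in_iff_edge_list)
  ultimately have "card H - 1 \<le> card F" using card_mono[OF assms(3)] by metis
  then show ?thesis by simp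
qed

lemma closed_walk_spanning_le_twice_edges:
  assumes "connected_graph H F" "finite H" "finite F"
  obtains w where "walk_in H F w" "hd w = last w" "set w = H" "walk_len w \<le> 2 * card F"
proof -
  obtain w where w: "walk_in H F w" "hd w = last w" "set w = H" "walk_len w = 2 * (card H - 1)"
    by (rule closed_walk_spanning[OF assms(1,2)])
  moreover have "walk_len w \<le> 2 * card F"
    using w(4) card_vertices_le_Suc_card_edges[OF assms] by simp
  ultimately show ?thesis by (intro that)
qed

locale connected_simple_graph =
  fixes V :: "'a set" and E :: "'a set set"
  assumes simple: "simple_graph V E" and connected: "connected_graph V E"
begin

lemma finite_vertices: "finite V"
  using simple unfolding simple_graph_def by blast

lemma edge_doubleton: "e \<in> E \<Longrightarrow> \<exists>u v. u \<in> V \<and> v \<in> V \<and> u \<noteq> v \<and> e = {u, v}"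
  using simple unfolding simple_graph_def by blast

lemma finite_edges: "finite E"
proof -
  have "E \<subseteq> Pow V" by (auto dest: edge_doubleton)
  then show ?thesis using finite_vertices by (metis finite_Pow_iff finite_subset)
qed

lemma shortest_path_exists:
  assumes "u \<in> V" "v \<in> V"
  obtains P where "shortest_path V E u v P"
  using assms connected shortest_path_exists_walk unfolding connected_graph_def by metis

lemma walk_nth_in_vertices: "walk_in V E xs \<Longrightarrow> i < length xs \<Longrightarrow> xs ! i \<in> V"
  unfolding walk_in_def by auto

lemma dist_triangle:
  assumes "u \<in> V" "v \<in> V" "w \<in> V"
  shows "dist V E u w \<le> dist V E u v + dist V E v w"
proof -
  obtain P Q where P: "shortest_path V E u v P" and Q: "shortest_path V E v w Q"
    using shortest_path_exists assms by metis
  note p = shortest_pathD[OF P] and q = shortest_pathD[OF Q]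
  have "last P = hd Q" using p q by simp
  from dist_le_walk_len[OF walk_join(1)[OF p(1) q(1) this]] show ?thesis
    using walk_join(2-5)[OF p(1) q(1) \<open>last P = hd Q\<close>] p q by simp
qed

lemma dist_commute:
  assumes "u \<in> V" "v \<in> V"
  shows "dist V E u v = dist V E v u"
proof -
  have "dist V E v u \<le> dist V E u v" if uv: "u \<in> V" "v \<in> V" for u v
  proof -
    obtain P where "shortest_path V E u v P" by (rule shortest_path_exists[OF uv])
    from shortest_pathD[OF this] show ?thesis
      using dist_le_walk_len[OF walk_rev] walk_len_rev by (metis hd_rev last_rev)
  qed
  then show ?thesis using assms by (meson le_antisym)
qed

lemma dist_self: "u \<in> V \<Longrightarrow> dist V E u u = 0"
  using dist_le_walk_len[of V E "[u]"] by (simp add: walk_in_def walk_len_def)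

lemma dist_eq_0D:
  assumes "u \<in> V" "v \<in> V" "dist V E u v = 0"
  shows "u = v"
proof -
  obtain P where "shortest_path V E u v P" by (rule shortest_path_exists[OF assms(1,2)])
  from shortest_pathD[OF this] assms(3) show ?thesis
    by (cases P) (auto simp: walk_len_def walk_in_def)
qed

lemma walk_nth_dist_le:
  "walk_in V E xs \<Longrightarrow> i \<le> j \<Longrightarrow> j < length xs \<Longrightarrow> dist V E (xs ! i) (xs ! j) \<le> j - i"
  using subwalk(1,2,3,6) dist_le_walk_len by metis

lemma shortest_path_nth_dist:
  assumes P: "shortest_path V E u v P" and i: "i < length P"
  shows "dist V E u (P ! i) = i" "dist V E (P ! i) v = walk_len P - i"
proof -
  note p = shortest_pathD[OF P]
  have len: "walk_len P < length P" using i by (simp add: walk_len_def)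
  have ends: "P ! 0 = u" "P ! walk_len P = v" using walk_hd_last_nth[OF p(1)] p by simp_all
  have "dist V E u (P ! i) \<le> i" using walk_nth_dist_le[OF p(1), of 0 i] i ends by simp
  moreover have "dist V E (P ! i) v \<le> walk_len P - i"
    using walk_nth_dist_le[OF p(1), of i "walk_len P"] i ends len by (simp add: walk_len_def)
  moreover have "dist V E u v \<le> dist V E u (P ! i) + dist V E (P ! i) v"
    using dist_triangle[of "P ! 0" "P ! i" "P ! walk_len P"] walk_nth_in_vertices[OF p(1)] i ends len
    by (metis le_less_trans zero_le)
  ultimately show "dist V E u (P ! i) = i" "dist V E (P ! i) v = walk_len P - i"
    using p(4) i by (simp_all add: walk_len_def)
qed

lemma shortest_path_rev:
  assumes "shortest_path V E u v P"
  shows "shortest_path V E v u (rev P)"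
proof -
  note p = shortest_pathD[OF assms]
  have "u \<in> V" "v \<in> V" using p by (auto simp: walk_in_def)
  then show ?thesis using p walk_rev[OF p(1)] dist_commute
    by (simp add: shortest_path_def hd_rev last_rev walk_len_rev)
qed

lemma steiner_subgraph_exists:
  assumes "S \<subseteq> V"
  obtains H F where "H \<subseteq> V" "S \<subseteq> H" "F \<subseteq> E" "\<forall>e\<in>F. e \<subseteq> H" "connected_graph H F"
    "card F = steiner_dist V E S"
proof -
  have "\<forall>e\<in>E. e \<subseteq> V" using edge_doubleton by blast
  then have "\<exists>m H F. H \<subseteq> V \<and> S \<subseteq> H \<and> F \<subseteq> E \<and> (\<forall>e\<in>F. e \<subseteq> H) \<and> connected_graph H F \<and>
      card F = m"
    using assms connected by blast
  from LeastI_ex[OF this] show ?thesis using that unfolding steiner_dist_def by blast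
qed

lemma steiner_dist_le_card_walk_edges:
  assumes "walk_in V E xs" "S \<subseteq> set xs"
  shows "steiner_dist V E S \<le> card (set (edge_list xs))"
proof (rule steiner_dist_le[OF _ assms(2) _ _ connected_graph_walk[OF assms(1)]])
  show "set xs \<subseteq> V" "set (edge_list xs) \<subseteq> E"
    using assms(1) by (auto simp: walk_in_iff_edge_list)
  show "\<forall>e\<in>set (edge_list xs). e \<subseteq> set xs" using edge_subset_walk by blast
qed

lemma steiner_dist_le_walk_len:
  "walk_in V E xs \<Longrightarrow> S \<subseteq> set xs \<Longrightarrow> steiner_dist V E S \<le> walk_len xs"
  using steiner_dist_le_card_walk_edges card_edges_le_walk_len le_trans by blast

lemma steiner_dist_mono:
  assumes "X \<subseteq> S" "S \<subseteq> V"
  shows "steiner_dist V E X \<le> steiner_dist V E S"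
proof -
  obtain H F where "H \<subseteq> V" "S \<subseteq> H" "F \<subseteq> E" "\<forall>e\<in>F. e \<subseteq> H" "connected_graph H F"
    "card F = steiner_dist V E S"
    by (rule steiner_subgraph_exists[OF assms(2)])
  then show ?thesis using steiner_dist_le[of H V X F E] assms(1) by auto
qed

lemma card_le_Suc_steiner_dist:
  assumes "S \<subseteq> V"
  shows "card S \<le> steiner_dist V E S + 1"
proof -
  obtain H F where HF: "H \<subseteq> V" "S \<subseteq> H" "F \<subseteq> E" "connected_graph H F"
    "card F = steiner_dist V E S"
    by (rule steiner_subgraph_exists[OF assms])
  have "finite H" "finite F" using HF(1,3) finite_vertices finite_edges finite_subset by auto
  then have "card S \<le> card H" "card H \<le> card F + 1"
    using HF card_mono card_vertices_le_Suc_card_edges by blast+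
  then show ?thesis using HF(5) by simp
qed

lemma tsp_walk_exists:
  assumes "S \<subseteq> V"
  obtains w where "walk_in V E w" "hd w = last w" "S \<subseteq> set w" "walk_len w = tsp V E S"
proof -
  obtain w where "walk_in V E w" "hd w = last w" "set w = V"
    by (rule closed_walk_spanning[OF connected finite_vertices])
  then have "\<exists>l w. walk_in V E w \<and> hd w = last w \<and> S \<subseteq> set w \<and> walk_len w = l"
    using assms by blast
  from LeastI_ex[OF this] show ?thesis using that unfolding tsp_def by blast
qed

lemma tsp_le_twice_steiner_dist:
  assumes "S \<subseteq> V"
  shows "tsp V E S \<le> 2 * steiner_dist V E S"
proof -
  obtain H F where HF: "H \<subseteq> V" "S \<subseteq> H" "F \<subseteq> E" "connected_graph H F"
    "card F = steiner_dist V E S"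
    by (rule steiner_subgraph_exists[OF assms])
  have "finite H" "finite F" using HF(1,3) finite_vertices finite_edges finite_subset by auto
  then obtain w where w: "walk_in H F w" "hd w = last w" "set w = H" "walk_len w \<le> 2 * card F"
    using closed_walk_spanning_le_twice_edges[OF HF(4)] by blast
  have "tsp V E S \<le> walk_len w"
    using tsp_le_walk_len walk_mono[OF w(1) HF(1,3)] w(2,3) HF(2) by blast
  then show ?thesis using w(4) HF(5) by simp
qed

lemma W_tsp_le_twice_W_steiner: "W_tsp V E k \<le> 2 * W_steiner V E k"
  unfolding W_tsp_def W_steiner_def sum_distrib_left
  by (intro sum_mono) (simp add: tsp_le_twice_steiner_dist)

lemma W_tsp_eq_twice_W_steiner_iff:
  "W_tsp V E k = 2 * W_steiner V E k \<longleftrightarrow>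
     (\<forall>S\<in>{S. S \<subseteq> V \<and> card S = k}. tsp V E S = 2 * steiner_dist V E S)"
proof -
  have "finite {S. S \<subseteq> V \<and> card S = k}" using finite_vertices by simp
  then show ?thesis unfolding W_tsp_def W_steiner_def sum_distrib_left
    using sum_mono_inv[of "tsp V E" _ "\<lambda>S. 2 * steiner_dist V E S"] tsp_le_twice_steiner_dist
    by (metis (no_types, lifting) mem_Collect_eq sum.cong)
qed

section \<open>Two and three vertices\<close>

definition perimeter :: "'a \<Rightarrow> 'a \<Rightarrow> 'a \<Rightarrow> nat" where
  "perimeter u v w = dist V E u v + dist V E v w + dist V E w u"

lemma perimeter_commute:
  assumes "u \<in> V" "v \<in> V" "w \<in> V"
  shows "perimeter v u w = perimeter u v w" "perimeter u w v = perimeter u v w"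
    "perimeter v w u = perimeter u v w" "perimeter w u v = perimeter u v w"
    "perimeter w v u = perimeter u v w"
  using dist_commute assms unfolding perimeter_def by auto

lemma closed_walk_sorted_perimeter_le:
  assumes w: "walk_in V E xs" "hd xs = last xs" and pqr: "p \<le> q" "q \<le> r" "r < length xs"
  shows "perimeter (xs ! p) (xs ! q) (xs ! r) \<le> walk_len xs"
proof -
  have ends: "xs ! walk_len xs = xs ! 0" using w walk_hd_last_nth by metis
  have len: "walk_len xs = length xs - 1" by (simp add: walk_len_def)
  have "dist V E (xs ! p) (xs ! q) \<le> q - p" "dist V E (xs ! q) (xs ! r) \<le> r - q"
    "dist V E (xs ! r) (xs ! walk_len xs) \<le> walk_len xs - r" "dist V E (xs ! 0) (xs ! p) \<le> p"
    using walk_nth_dist_le[OF w(1), of p q] walk_nth_dist_le[OF w(1), of q r]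
      walk_nth_dist_le[OF w(1), of r "walk_len xs"] walk_nth_dist_le[OF w(1), of 0 p] pqr len
    by auto
  moreover have "xs ! r \<in> V" "xs ! 0 \<in> V" "xs ! p \<in> V"
    using walk_nth_in_vertices[OF w(1)] pqr by (auto intro: le_less_trans)
  then have "dist V E (xs ! r) (xs ! p) \<le> dist V E (xs ! r) (xs ! 0) + dist V E (xs ! 0) (xs ! p)"
    by (rule dist_triangle)
  ultimately show ?thesis using ends pqr len unfolding perimeter_def by simp
qed

lemma closed_walk_perimeter_le:
  assumes w: "walk_in V E xs" "hd xs = last xs" and uvw: "{u, v, w} \<subseteq> set xs"
  shows "perimeter u v w \<le> walk_len xs"
proof -
  obtain i j l where ijl: "i < length xs" "j < length xs" "l < length xs"
    and nth: "u = xs ! i" "v = xs ! j" "w = xs ! l"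
    using uvw by (auto simp: in_set_conv_nth)
  have V: "u \<in> V" "v \<in> V" "w \<in> V" using uvw w(1) by (auto simp: walk_in_def)
  note sorted = closed_walk_sorted_perimeter_le[OF w]
  consider "i \<le> j" "j \<le> l" | "i \<le> l" "l \<le> j" | "j \<le> i" "i \<le> l" | "j \<le> l" "l \<le> i"
    | "l \<le> i" "i \<le> j" | "l \<le> j" "j \<le> i" by linarith
  then show ?thesis
    by cases (use sorted[of i j l] sorted[of i l j] sorted[of j i l] sorted[of j l i]
      sorted[of l i j] sorted[of l j i] ijl nth perimeter_commute[OF V] in simp_all)
qed

lemma walk_through_geodesics:
  assumes "u \<in> V" "v \<in> V" "w \<in> V"
  obtains W where "walk_in V E W" "hd W = u" "last W = w" "{u, v, w} \<subseteq> set W"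
    "walk_len W = dist V E u v + dist V E v w"
proof -
  obtain P1 P2 where P: "shortest_path V E u v P1" "shortest_path V E v w P2"
    using shortest_path_exists assms by metis
  note p1 = shortest_pathD[OF P(1)] and p2 = shortest_pathD[OF P(2)]
  have "last P1 = hd P2" using p1 p2 by simp
  note j = walk_join[OF p1(1) p2(1) this]
  have ne: "P1 \<noteq> []" "P1 @ tl P2 \<noteq> []" using p1(1) by (auto simp: walk_in_def)
  have "{u, v, w} \<subseteq> set (P1 @ tl P2)"
    using hd_in_set[OF ne(1)] last_in_set[OF ne(1)] last_in_set[OF ne(2)] j(3) p1(2,3) p2(3)
    by auto
  with j p1 p2 show ?thesis by (intro that[of "P1 @ tl P2"]) simp_all
qed

lemma tsp_triple_eq_perimeter:
  assumes "u \<in> V" "v \<in> V" "w \<in> V"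
  shows "tsp V E {u, v, w} = perimeter u v w"
proof (rule antisym)
  obtain W where W: "walk_in V E W" "hd W = u" "last W = w" "{u, v, w} \<subseteq> set W"
    "walk_len W = dist V E u v + dist V E v w"
    by (rule walk_through_geodesics[OF assms])
  obtain P where "shortest_path V E w u P" by (rule shortest_path_exists[OF assms(3,1)])
  note p = shortest_pathD[OF this]
  have "last W = hd P" using W p by simp
  note j = walk_join[OF W(1) p(1) this]
  have "{u, v, w} \<subseteq> set (W @ tl P)" using W(4) by auto
  then show "tsp V E {u, v, w} \<le> perimeter u v w"
    using tsp_le_walk_len[OF j(1)] j W p unfolding perimeter_def by simp
next
  obtain xs where "walk_in V E xs" "hd xs = last xs" "{u, v, w} \<subseteq> set xs"
    "walk_len xs = tsp V E {u, v, w}"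
    by (rule tsp_walk_exists[of "{u, v, w}"]) (use assms in auto)
  then show "perimeter u v w \<le> tsp V E {u, v, w}" using closed_walk_perimeter_le by metis
qed

lemma tsp_pair_eq_twice_dist:
  assumes "u \<in> V" "v \<in> V"
  shows "tsp V E {u, v} = 2 * dist V E u v"
  using tsp_triple_eq_perimeter[of u v v] assms dist_self dist_commute
  by (simp add: perimeter_def)

lemma steiner_dist_pair_le_dist:
  assumes "u \<in> V" "v \<in> V"
  shows "steiner_dist V E {u, v} \<le> dist V E u v"
proof -
  obtain P where "shortest_path V E u v P" by (rule shortest_path_exists[OF assms])
  from shortest_pathD[OF this] show ?thesis
    using steiner_dist_le_walk_len by (metis empty_subsetI hd_in_set insert_subset last_in_set
      walk_in_def)
qed

lemma tsp_pair_eq_twice_steiner_dist: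
  assumes "u \<in> V" "v \<in> V"
  shows "tsp V E {u, v} = 2 * steiner_dist V E {u, v}"
  using tsp_le_twice_steiner_dist[of "{u, v}"] steiner_dist_pair_le_dist tsp_pair_eq_twice_dist
    assms by fastforce

lemma tsp_eq_twice_steiner_dist_card_2:
  "S \<subseteq> V \<Longrightarrow> card S = 2 \<Longrightarrow> tsp V E S = 2 * steiner_dist V E S"
  by (auto simp: card_2_iff tsp_pair_eq_twice_steiner_dist)

lemma steiner_dist_triple_le:
  assumes "a \<in> V" "b \<in> V" "c \<in> V"
  shows "steiner_dist V E {a, b, c} \<le> dist V E a b + dist V E b c"
proof -
  obtain W where "walk_in V E W" "{a, b, c} \<subseteq> set W" "walk_len W = dist V E a b + dist V E b c"
    by (rule walk_through_geodesics[OF assms])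
  then show ?thesis using steiner_dist_le_walk_len by metis
qed

lemma steiner_median:
  assumes "u \<in> V" "v \<in> V" "w \<in> V"
  obtains x where "x \<in> V" "dist V E x u + dist V E x v + dist V E x w \<le> steiner_dist V E {u, v, w}"
proof -
  obtain H F where HF: "H \<subseteq> V" "{u, v, w} \<subseteq> H" "F \<subseteq> E" "connected_graph H F"
    "card F = steiner_dist V E {u, v, w}"
    by (rule steiner_subgraph_exists[of "{u, v, w}"]) (use assms in auto)
  \<comment> \<open>x is where a walk from w first meets a u-v path Q of the Steiner subgraph\<close>
  obtain Q where Q: "walk_in H F Q" "hd Q = u" "last Q = v" "distinct Q"
    using HF(2,4) walk_to_path unfolding connected_graph_def by (metis insert_subset)
  obtain P where P: "walk_in H F P" "hd P = w" "last P = u"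
    using HF(2,4) unfolding connected_graph_def by (metis insert_subset)
  have "last P \<in> set Q" using P(3) Q(1,2) by (metis hd_in_set walk_in_def)
  then obtain R0 where R0: "walk_in H F R0" "hd R0 = w" "last R0 \<in> set Q"
    "set (edge_list R0) \<inter> set (edge_list Q) = {}"
    using walk_first_hit[OF P(1)] P(2) by metis
  obtain R where R: "walk_in H F R" "hd R = w" "last R = last R0" "distinct R"
    "set (edge_list R) \<inter> set (edge_list Q) = {}"
    using walk_to_path[OF R0(1)] R0 by (metis disjoint_iff subsetD)
  define x where "x = last R"
  have "card (set (edge_list Q)) + card (set (edge_list R)) =
      card (set (edge_list Q) \<union> set (edge_list R))"
    using R(5) by (simp add: card_Un_disjoint Int_commute)
  also have "\<dots> \<le> card F"
    using Q(1) R(1) card_mono[OF finite_subset[OF HF(3) finite_edges]]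
    by (simp add: walk_in_iff_edge_list)
  finally have edges: "walk_len Q + walk_len R \<le> card F"
    using card_edges_distinct_walk[OF Q(4)] card_edges_distinct_walk[OF R(4)] by simp
  have QV: "walk_in V E Q" and RV: "walk_in V E R" using walk_mono Q(1) R(1) HF(1,3) by blast+
  obtain m where m: "m < length Q" "x = Q ! m" using R(3) R0(3) unfolding x_def
    by (metis in_set_conv_nth)
  have x: "x \<in> V" using RV unfolding x_def walk_in_def by auto
  have "dist V E u x \<le> m" "dist V E x v \<le> walk_len Q - m" "m \<le> walk_len Q"
    using walk_nth_dist_le[OF QV, of 0 m] walk_nth_dist_le[OF QV, of m "walk_len Q"] m
      walk_hd_last_nth[OF QV] Q(2,3) by (auto simp: walk_len_def)
  moreover have "dist V E w x \<le> walk_len R" using dist_le_walk_len[OF RV] R(2) x_def by simp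
  moreover have "dist V E x u = dist V E u x" "dist V E x w = dist V E w x"
    using dist_commute assms x by auto
  ultimately have "dist V E x u + dist V E x v + dist V E x w \<le> steiner_dist V E {u, v, w}"
    using edges HF(5) by linarith
  with x show ?thesis by (rule that)
qed

section \<open>Edge-disjoint geodesic triangles\<close>

lemma shortest_path_join:
  assumes P: "shortest_path V E u x P" and Q: "shortest_path V E x v Q"
    and geodesic: "dist V E u v = dist V E u x + dist V E x v"
  shows "shortest_path V E u v (P @ tl Q)"
proof -
  note p = shortest_pathD[OF P] and q = shortest_pathD[OF Q]
  have "last P = hd Q" using p q by simp
  from walk_join[OF p(1) q(1) this] show ?thesis
    using p q geodesic by (simp add: shortest_path_def)
qed

lemma shortest_paths_common_edge:
  assumes Y: "shortest_path V E a b Y" and Z: "shortest_path V E a c Z"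
    and e: "e \<in> set (edge_list Y)" "e \<in> set (edge_list Z)"
  obtains y t where "y \<in> V" "1 \<le> t" "dist V E a y = t" "dist V E y b + t = dist V E a b"
    "dist V E y c + t = dist V E a c"
proof -
  note y = shortest_pathD[OF Y] and z = shortest_pathD[OF Z]
  obtain i j where "i < length (edge_list Y)" "e = edge_list Y ! i"
    "j < length (edge_list Z)" "e = edge_list Z ! j"
    using e by (metis in_set_conv_nth)
  then have i: "Suc i < length Y" "e = {Y ! i, Y ! Suc i}"
    and j: "Suc j < length Z" "e = {Z ! j, Z ! Suc j}"
    by (simp_all add: length_edge_list nth_edge_list)
  have dy: "dist V E a (Y ! i) = i" "dist V E a (Y ! Suc i) = Suc i"
    "dist V E (Y ! Suc i) b = walk_len Y - Suc i"
    using shortest_path_nth_dist[OF Y] i(1) by auto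
  have dz: "dist V E a (Z ! j) = j" "dist V E a (Z ! Suc j) = Suc j"
    "dist V E (Z ! Suc j) c = walk_len Z - Suc j"
    using shortest_path_nth_dist[OF Z] j(1) by auto
  \<comment> \<open>distances from a orient the common edge the same way on both paths\<close>
  have "Y ! i = Z ! j \<and> Y ! Suc i = Z ! Suc j \<or> Y ! i = Z ! Suc j \<and> Y ! Suc i = Z ! j"
    using i(2) j(2) by (auto simp: doubleton_eq_iff)
  moreover have "Y ! i \<noteq> Z ! Suc j \<or> Y ! Suc i \<noteq> Z ! j"
    using dy(1,2) dz(1,2) by force
  ultimately have same: "Y ! Suc i = Z ! Suc j" "i = j"
    using dy(1) dz(1) by (blast, metis)
  have "Y ! Suc i \<in> V" using walk_nth_in_vertices[OF y(1) i(1)] .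
  moreover have "Suc i \<le> walk_len Y" "Suc j \<le> walk_len Z" using i(1) j(1) by (auto simp: walk_len_def)
  ultimately show ?thesis
    by (intro that[of "Y ! Suc i" "Suc i"]) (use dy dz same y(4) z(4) in simp_all)
qed

lemma steiner_dist_insert_le:
  assumes "a \<in> V" "S \<subseteq> V" "y \<in> S"
  shows "steiner_dist V E (insert a S) \<le> steiner_dist V E S + dist V E a y"
proof -
  obtain H F where HF: "H \<subseteq> V" "S \<subseteq> H" "F \<subseteq> E" "\<forall>e\<in>F. e \<subseteq> H" "connected_graph H F"
    "card F = steiner_dist V E S"
    by (rule steiner_subgraph_exists[OF assms(2)])
  have "y \<in> V" using assms(2,3) by blast
  obtain P where "shortest_path V E a y P" by (rule shortest_path_exists[OF assms(1) \<open>y \<in> V\<close>])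
  note p = shortest_pathD[OF this]
  have "P \<noteq> []" using p(1) by (simp add: walk_in_def)
  then have "a \<in> set P" "y \<in> set P" using p(2,3) hd_in_set last_in_set by blast+
  have "H \<union> set P \<subseteq> V" "F \<union> set (edge_list P) \<subseteq> E"
    using HF(1,3) p(1) by (auto simp: walk_in_iff_edge_list)
  moreover have "insert a S \<subseteq> H \<union> set P" using HF(2) \<open>a \<in> set P\<close> by blast
  moreover have "\<forall>e\<in>F \<union> set (edge_list P). e \<subseteq> H \<union> set P"
    using HF(4) edge_subset_walk by blast
  moreover have "connected_graph (H \<union> set P) (F \<union> set (edge_list P))"
    using HF(2) assms(3) \<open>y \<in> set P\<close>
    by (intro connected_graph_Un[OF HF(5) connected_graph_walk[OF p(1)]]) blast+
  ultimately have "steiner_dist V E (insert a S) \<le> card (F \<union> set (edge_list P))"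
    by (intro steiner_dist_le)
  also have "\<dots> \<le> card F + card (set (edge_list P))" by (rule card_Un_le)
  also have "\<dots> \<le> steiner_dist V E S + dist V E a y"
    using card_edges_le_walk_len[of P] p(4) HF(6) by simp
  finally show ?thesis .
qed

lemma deficient_triple_descent:
  assumes abc: "a \<in> V" "b \<in> V" "c \<in> V"
    and deficient: "perimeter a b c < 2 * steiner_dist V E {a, b, c}"
    and Y: "shortest_path V E a b Y" and Z: "shortest_path V E a c Z"
    and e: "e \<in> set (edge_list Y)" "e \<in> set (edge_list Z)"
  obtains y where "y \<in> V" "perimeter y b c < 2 * steiner_dist V E {y, b, c}"
    "perimeter y b c < perimeter a b c"
proof -
  obtain y t where y: "y \<in> V" "1 \<le> t" "dist V E a y = t" "dist V E y b + t = dist V E a b"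
    "dist V E y c + t = dist V E a c"
    by (rule shortest_paths_common_edge[OF Y Z e])
  have "steiner_dist V E {a, b, c} \<le> steiner_dist V E (insert a {y, b, c})"
    using steiner_dist_mono abc y(1) by auto
  also have "\<dots> \<le> steiner_dist V E {y, b, c} + t"
    using steiner_dist_insert_le[of a "{y, b, c}" y] abc y by simp
  finally have "steiner_dist V E {a, b, c} \<le> steiner_dist V E {y, b, c} + t" .
  moreover have "perimeter y b c + 2 * t = perimeter a b c"
    using y dist_commute[of c y] dist_commute[of c a] abc unfolding perimeter_def by simp
  ultimately show ?thesis using y(1,2) deficient by (intro that[of y]) simp_all
qed

definition disjoint_geodesic_triangle :: "'a \<Rightarrow> 'a \<Rightarrow> 'a \<Rightarrow> bool" where
  "disjoint_geodesic_triangle u v w \<longleftrightarrow>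
     2 * max (dist V E u v) (max (dist V E u w) (dist V E v w))
       < dist V E u v + dist V E u w + dist V E v w \<and>
     (\<forall>P1 P2 P3. shortest_path V E u v P1 \<and> shortest_path V E v w P2 \<and>
        shortest_path V E w u P3 \<longrightarrow>
        walk_edges P1 \<inter> walk_edges P2 = {} \<and> walk_edges P2 \<inter> walk_edges P3 = {} \<and>
        walk_edges P1 \<inter> walk_edges P3 = {})"

lemma geodesics_through_edge_disjoint:
  assumes x: "x \<in> V" and uvw: "u \<in> V" "v \<in> V" "w \<in> V"
    and geo: "dist V E u v = dist V E u x + dist V E x v" "dist V E w u = dist V E w x + dist V E x u"
    and disjoint: "\<And>P1 P3. shortest_path V E u v P1 \<Longrightarrow> shortest_path V E w u P3 \<Longrightarrow>
      walk_edges P1 \<inter> walk_edges P3 = {}"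
  shows "x = u"
proof -
  obtain Ru Rv Rw where R: "shortest_path V E x u Ru" "shortest_path V E x v Rv"
    "shortest_path V E x w Rw"
    using shortest_path_exists[OF x] uvw by metis
  \<comment> \<open>a u-v geodesic and a w-u geodesic through x both contain the geodesic from x to u\<close>
  have "shortest_path V E u v (rev Ru @ tl Rv)"
    using shortest_path_join[OF shortest_path_rev[OF R(1)] R(2)] geo(1) .
  moreover have "shortest_path V E w u (rev Rw @ tl Ru)"
    using shortest_path_join[OF shortest_path_rev[OF R(3)] R(1)] geo(2) .
  ultimately have "walk_edges (rev Ru @ tl Rv) \<inter> walk_edges (rev Rw @ tl Ru) = {}"
    by (rule disjoint)
  moreover have "edge_list (rev Ru @ tl Rv) = rev (edge_list Ru) @ edge_list Rv"
    "edge_list (rev Rw @ tl Ru) = rev (edge_list Rw) @ edge_list Ru"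
    using R[THEN shortest_pathD(1)] R[THEN shortest_pathD(2)]
    by (simp_all add: edge_list_join last_rev edge_list_rev walk_in_def)
  ultimately have "(set (edge_list Ru) \<union> set (edge_list Rv)) \<inter>
      (set (edge_list Rw) \<union> set (edge_list Ru)) = {}"
    by (simp add: set_edge_list[symmetric])
  moreover have "set (edge_list Ru) \<subseteq>
      (set (edge_list Ru) \<union> set (edge_list Rv)) \<inter> (set (edge_list Rw) \<union> set (edge_list Ru))"
    by blast
  ultimately have "edge_list Ru = []" by (metis set_empty subset_empty)
  then have "dist V E x u = 0"
    using shortest_pathD(4)[OF R(1)] by (simp add: walk_len_eq_length_edge_list)
  then show "x = u" using dist_eq_0D[OF x uvw(1)] by blast
qed

lemma disjoint_geodesic_triangle_deficient:
  assumes uvw: "u \<in> V" "v \<in> V" "w \<in> V" and T: "disjoint_geodesic_triangle u v w"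
  shows "perimeter u v w < 2 * steiner_dist V E {u, v, w}"
proof (rule ccontr)
  assume "\<not> perimeter u v w < 2 * steiner_dist V E {u, v, w}"
  then have le: "2 * steiner_dist V E {u, v, w} \<le> perimeter u v w" by simp
  obtain x where x: "x \<in> V" "dist V E x u + dist V E x v + dist V E x w \<le> steiner_dist V E {u, v, w}"
    by (rule steiner_median[OF uvw])
  note dist_triangle[OF uvw(1) x(1) uvw(2)] dist_triangle[OF uvw(2) x(1) uvw(3)]
    dist_triangle[OF uvw(3) x(1) uvw(1)]
  moreover note dist_commute[OF uvw(2) x(1)] dist_commute[OF x(1) uvw(3)]
    dist_commute[OF x(1) uvw(1)]
  \<comment> \<open>x is a median, so the triangle inequalities through x are all tight\<close>
  ultimately have geo: "dist V E u v = dist V E u x + dist V E x v"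
    "dist V E v w = dist V E v x + dist V E x w" "dist V E w u = dist V E w x + dist V E x u"
    using x(2) le unfolding perimeter_def by linarith+
  obtain P2 where P2: "shortest_path V E v w P2" by (rule shortest_path_exists[OF uvw(2,3)])
  have "walk_edges P1 \<inter> walk_edges P3 = {}"
    if "shortest_path V E u v P1" "shortest_path V E w u P3" for P1 P3
    using T[unfolded disjoint_geodesic_triangle_def, THEN conjunct2, rule_format,
      OF conjI[OF that(1) conjI[OF P2 that(2)]]] by (elim conjE)
  then have "x = u" using geodesics_through_edge_disjoint[OF x(1) uvw geo(1,3)] by blast
  then have "dist V E v w = dist V E u v + dist V E u w"
    using geo(2) dist_commute[OF uvw(2,1)] by simp
  moreover have "dist V E v w \<le> max (dist V E u v) (max (dist V E u w) (dist V E v w))" by simp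
  ultimately show False using T unfolding disjoint_geodesic_triangle_def by linarith
qed

lemma deficient_triple_nondegenerate:
  assumes uvw: "u \<in> V" "v \<in> V" "w \<in> V"
    and deficient: "perimeter u v w < 2 * steiner_dist V E {u, v, w}"
  shows "2 * max (dist V E u v) (max (dist V E u w) (dist V E v w))
    < dist V E u v + dist V E u w + dist V E v w"
proof (rule ccontr)
  assume "\<not> ?thesis"
  \<comment> \<open>then one side is at least the sum of the other two, and those two span a short Steiner tree\<close>
  moreover have "steiner_dist V E {u, v, w} \<le> dist V E u v + dist V E v w"
    "steiner_dist V E {u, v, w} \<le> dist V E w u + dist V E u v"
    "steiner_dist V E {u, v, w} \<le> dist V E u w + dist V E w v"
    using steiner_dist_triple_le[of u v w] steiner_dist_triple_le[of w u v]
      steiner_dist_triple_le[of u w v] uvw by (simp_all add: insert_commute)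
  moreover note dist_commute[OF uvw(1,3)] dist_commute[OF uvw(2,3)]
  ultimately show False
    using deficient unfolding perimeter_def by (simp add: max_def split: if_splits)
qed

lemma deficient_triple_shared_edge_descent:
  assumes uvw: "u \<in> V" "v \<in> V" "w \<in> V"
    and deficient: "perimeter u v w < 2 * steiner_dist V E {u, v, w}"
    and shared: "\<not> disjoint_geodesic_triangle u v w"
  obtains u' v' w' where "u' \<in> V" "v' \<in> V" "w' \<in> V"
    "perimeter u' v' w' < 2 * steiner_dist V E {u', v', w'}" "perimeter u' v' w' < perimeter u v w"
proof -
  obtain P1 P2 P3 where P: "shortest_path V E u v P1" "shortest_path V E v w P2"
    "shortest_path V E w u P3"
    and "walk_edges P1 \<inter> walk_edges P2 \<noteq> {} \<or> walk_edges P2 \<inter> walk_edges P3 \<noteq> {}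
      \<or> walk_edges P1 \<inter> walk_edges P3 \<noteq> {}"
    using shared deficient_triple_nondegenerate[OF uvw deficient]
    unfolding disjoint_geodesic_triangle_def by blast
  then consider (uv_vw) e where "e \<in> set (edge_list (rev P1))" "e \<in> set (edge_list P2)"
    | (vw_wu) e where "e \<in> set (edge_list (rev P2))" "e \<in> set (edge_list P3)"
    | (uv_wu) e where "e \<in> set (edge_list P1)" "e \<in> set (edge_list (rev P3))"
    by (auto simp: set_edge_list[symmetric] edge_list_rev)
  then show ?thesis
  proof cases
    case uv_vw
    have "perimeter v u w < 2 * steiner_dist V E {v, u, w}"
      using deficient perimeter_commute(1)[OF uvw] by (simp add: insert_commute)
    from deficient_triple_descent[OF uvw(2,1,3) this shortest_path_rev[OF P(1)] P(2) uv_vw]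
    show ?thesis using that uvw perimeter_commute(1)[OF uvw] by metis
  next
    case vw_wu
    have "perimeter w v u < 2 * steiner_dist V E {w, v, u}"
      using deficient perimeter_commute(5)[OF uvw] by (simp add: insert_commute)
    from deficient_triple_descent[OF uvw(3,2,1) this shortest_path_rev[OF P(2)] P(3) vw_wu]
    show ?thesis using that uvw perimeter_commute(5)[OF uvw] by metis
  next
    case uv_wu
    from deficient_triple_descent[OF uvw deficient P(1) shortest_path_rev[OF P(3)] uv_wu]
    show ?thesis using that uvw by metis
  qed
qed

lemma deficient_triple_imp_disjoint_geodesic_triangle:
  assumes "u \<in> V" "v \<in> V" "w \<in> V" "perimeter u v w < 2 * steiner_dist V E {u, v, w}"
  shows "\<exists>u\<in>V. \<exists>v\<in>V. \<exists>w\<in>V. disjoint_geodesic_triangle u v w"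
  using assms
proof (induction "perimeter u v w" arbitrary: u v w rule: less_induct)
  case less
  show ?case
  proof (cases "disjoint_geodesic_triangle u v w")
    case True
    then show ?thesis using less.prems by blast
  next
    case False
    obtain u' v' w' where "u' \<in> V" "v' \<in> V" "w' \<in> V"
      "perimeter u' v' w' < 2 * steiner_dist V E {u', v', w'}" "perimeter u' v' w' < perimeter u v w"
      by (rule deficient_triple_shared_edge_descent[OF less.prems False])
    then show ?thesis using less.hyps by blast
  qed
qed

lemma tsp_eq_twice_steiner_dist_card_3_iff:
  "(\<forall>S\<in>{S. S \<subseteq> V \<and> card S = 3}. tsp V E S = 2 * steiner_dist V E S) \<longleftrightarrow>
     \<not> (\<exists>u\<in>V. \<exists>v\<in>V. \<exists>w\<in>V. disjoint_geodesic_triangle u v w)"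
proof
  assume all: "\<forall>S\<in>{S. S \<subseteq> V \<and> card S = 3}. tsp V E S = 2 * steiner_dist V E S"
  show "\<not> (\<exists>u\<in>V. \<exists>v\<in>V. \<exists>w\<in>V. disjoint_geodesic_triangle u v w)"
  proof
    assume "\<exists>u\<in>V. \<exists>v\<in>V. \<exists>w\<in>V. disjoint_geodesic_triangle u v w"
    then obtain u v w where uvw: "u \<in> V" "v \<in> V" "w \<in> V" "disjoint_geodesic_triangle u v w"
      by blast
    have lt: "tsp V E {u, v, w} < 2 * steiner_dist V E {u, v, w}"
      using disjoint_geodesic_triangle_deficient[OF uvw] tsp_triple_eq_perimeter[OF uvw(1-3)]
      by simp
    \<comment> \<open>pairs satisfy equality, so the three vertices are distinct\<close>
    then have "u \<noteq> v \<and> u \<noteq> w \<and> v \<noteq> w"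
      using tsp_pair_eq_twice_steiner_dist[of u w] tsp_pair_eq_twice_steiner_dist[of u v] uvw
      by (auto simp: insert_commute)
    then have "card {u, v, w} = 3" by simp
    then show False using all lt uvw by auto
  qed
next
  assume none: "\<not> (\<exists>u\<in>V. \<exists>v\<in>V. \<exists>w\<in>V. disjoint_geodesic_triangle u v w)"
  show "\<forall>S\<in>{S. S \<subseteq> V \<and> card S = 3}. tsp V E S = 2 * steiner_dist V E S"
  proof
    fix S assume "S \<in> {S. S \<subseteq> V \<and> card S = 3}"
    then obtain u v w where S: "S = {u, v, w}" and uvw: "u \<in> V" "v \<in> V" "w \<in> V"
      by (auto simp: card_3_iff)
    have "\<not> perimeter u v w < 2 * steiner_dist V E {u, v, w}"
      using deficient_triple_imp_disjoint_geodesic_triangle uvw none by blast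
    then show "tsp V E S = 2 * steiner_dist V E S"
      using tsp_le_twice_steiner_dist[of S] tsp_triple_eq_perimeter[OF uvw] S uvw by simp
  qed
qed

section \<open>Trees and shortest cycles\<close>

lemma closed_walk_edge_once_imp_cycle:
  assumes w: "walk_in V E w" "hd w = last w" and once: "count_list (edge_list w) e = 1"
  obtains cs where "is_cycle V E cs" "length cs \<le> walk_len w"
proof -
  obtain l1 l2 where l: "edge_list w = l1 @ e # l2" "e \<notin> set l1" "e \<notin> set l2"
    using once count_list_Suc_split_first[of "edge_list w" e 0] by (auto simp: count_list_0_iff)
  obtain A B where AB: "w = A @ B" "A \<noteq> []" "B \<noteq> []" "edge_list A = l1" "edge_list B = l2"
    "e = {last A, hd B}"
    using edge_list_split[OF l(1)] by blast
  have eE: "e \<in> E" using w(1) l(1) by (auto simp: walk_in_iff_edge_list)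
  have A: "walk_in V E A" and B: "walk_in V E B"
    using w(1) AB l(1) by (auto simp: walk_in_iff_edge_list)
  \<comment> \<open>going around the closed walk the other way joins the ends of e without using e\<close>
  have "last B = hd A" using w(2) AB by simp
  note BA = walk_join[OF B A this]
  obtain ys where ys: "walk_in V E ys" "hd ys = hd B" "last ys = last A" "distinct ys"
    "set (edge_list ys) \<subseteq> set (edge_list (B @ tl A))" "length ys \<le> length (B @ tl A)"
    using walk_to_path[OF BA(1)] BA(2,3) by metis
  have e_notin: "e \<notin> set (edge_list ys)" using ys(5) BA(4) AB(4,5) l(2,3) by auto
  have ends_ne: "last A \<noteq> hd B" using edge_doubleton[OF eE] AB(6) by (auto simp: doubleton_eq_iff)
  have ys_ne: "ys \<noteq> []" using ys(1) by (simp add: walk_in_def)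
  have "3 \<le> length ys"
  proof -
    have "length ys \<noteq> 1" using ys(2,3) ends_ne by (auto simp: length_Suc_conv)
    moreover have "length ys \<noteq> 2"
      using ys(2,3) e_notin AB(6) by (auto simp: length_Suc_conv numeral_2_eq_2 insert_commute)
    ultimately show ?thesis using ys_ne by (cases "length ys") (auto simp: numeral_3_eq_3)
  qed
  moreover have "walk_in V E (ys @ [hd ys])"
    using ys(1,2,3) ys_ne eE AB(6) B
    by (auto simp: walk_in_iff_edge_list edge_list_append_Cons insert_commute)
  ultimately have "is_cycle V E ys" unfolding is_cycle_def using ys(4) by simp
  moreover have "length (B @ tl A) = walk_len w" using AB(1,2) by (cases A) (simp_all add: walk_len_def)
  ultimately show ?thesis using ys(6) by (intro that[of ys]) simp_all
qed

lemma closed_walk_below_girth_edges_twice: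
  assumes girth: "\<forall>cs. is_cycle V E cs \<longrightarrow> g \<le> length cs"
    and w: "walk_in V E w" "hd w = last w" "walk_len w < g" and e: "e \<in> set (edge_list w)"
  shows "2 \<le> count_list (edge_list w) e"
proof (rule ccontr)
  assume "\<not> ?thesis"
  moreover have "count_list (edge_list w) e \<noteq> 0" using e by (simp add: count_list_0_iff)
  ultimately have "count_list (edge_list w) e = 1" by simp
  then obtain cs where "is_cycle V E cs" "length cs \<le> walk_len w"
    by (rule closed_walk_edge_once_imp_cycle[OF w(1,2)])
  then show False using girth w(3) by fastforce
qed

lemma acyclic_tsp_eq_twice_steiner_dist:
  assumes acyclic: "\<nexists>cs. is_cycle V E cs" and S: "S \<subseteq> V"
  shows "tsp V E S = 2 * steiner_dist V E S"
proof -
  obtain w where w: "walk_in V E w" "hd w = last w" "S \<subseteq> set w" "walk_len w = tsp V E S"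
    by (rule tsp_walk_exists[OF S])
  have "\<forall>e\<in>set (edge_list w). 2 \<le> count_list (edge_list w) e"
    using closed_walk_below_girth_edges_twice[of "Suc (walk_len w)"] acyclic w(1,2) by blast
  then have "2 * card (set (edge_list w)) \<le> walk_len w"
    using twice_card_set_le_length walk_len_eq_length_edge_list by metis
  moreover have "steiner_dist V E S \<le> card (set (edge_list w))"
    using steiner_dist_le_card_walk_edges w(1,3) by blast
  ultimately show ?thesis using tsp_le_twice_steiner_dist[OF S] w(4) by linarith
qed

lemma deficient_subset_of_closed_walk:
  assumes w: "walk_in V E w" "hd w = last w" and X: "X \<subseteq> set w" "card X \<le> k"
    and k: "k \<le> card (set w)" and short: "walk_len w < 2 * steiner_dist V E X"
  obtains S where "S \<subseteq> V" "card S = k" "tsp V E S < 2 * steiner_dist V E S"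
proof -
  have "finite X" using X(1) finite_subset by blast
  then have "k - card X \<le> card (set w - X)" using k X by (simp add: card_Diff_subset)
  then obtain T where T: "T \<subseteq> set w - X" "card T = k - card X" "finite T"
    using obtain_subset_with_card_n by metis
  define S where "S = X \<union> T"
  have "S \<subseteq> set w" unfolding S_def using T X by auto
  then have "S \<subseteq> V" using w(1) by (auto simp: walk_in_def)
  moreover have "card S = k" unfolding S_def using T \<open>finite X\<close> X(2) by (subst card_Un_disjoint) auto
  moreover have "tsp V E S < 2 * steiner_dist V E S"
  proof -
    have "tsp V E S \<le> walk_len w" using tsp_le_walk_len[OF w] \<open>S \<subseteq> set w\<close> .
    also have "\<dots> < 2 * steiner_dist V E X" by (rule short)
    also have "\<dots> \<le> 2 * steiner_dist V E S" using steiner_dist_mono \<open>S \<subseteq> V\<close> S_def by auto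
    finally show ?thesis .
  qed
  ultimately show ?thesis by (rule that)
qed

lemma deficient_set_of_card:
  assumes w: "walk_in V E w" "hd w = last w" and X: "X \<subseteq> set w" "card X \<le> k"
    and k: "k \<le> card V" and short: "walk_len w < 2 * steiner_dist V E X"
    "walk_len w + 2 < 2 * card (set w)"
  obtains S where "S \<subseteq> V" "card S = k" "tsp V E S < 2 * steiner_dist V E S"
proof (cases "k \<le> card (set w)")
  case True
  then show ?thesis using deficient_subset_of_closed_walk[OF w X _ short(1)] that by blast
next
  case False
  define j where "j = k - card (set w)"
  have "j \<le> card V - card (set w)" unfolding j_def using k by simp
  then obtain w' where w': "walk_in V E w'" "hd w' = hd w" "last w' = last w"
    "card (set w') = card (set w) + j" "walk_len w' = walk_len w + 2 * j"
    by (rule walk_extend_vertices[OF connected finite_vertices w(1)])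
  have card: "card (set w') = k" using w'(4) False unfolding j_def by simp
  have V: "set w' \<subseteq> V" using w'(1) by (auto simp: walk_in_def)
  have "tsp V E (set w') \<le> walk_len w'" using tsp_le_walk_len[OF w'(1)] w'(2,3) w(2) by simp
  moreover have "k \<le> steiner_dist V E (set w') + 1" using card_le_Suc_steiner_dist[OF V] card by simp
  moreover have "walk_len w' + 2 < 2 * k" using w'(5) short(2) False unfolding j_def by simp
  ultimately show ?thesis using V card by (intro that[of "set w'"]) simp_all
qed

lemma cycle_closed_walk:
  assumes "is_cycle V E cs"
  defines "wc \<equiv> cs @ [hd cs]"
  shows "walk_in V E wc" "hd wc = last wc" "set wc = set cs" "walk_len wc = length cs"
    "distinct (edge_list wc)"
proof -
  have len: "3 \<le> length cs" and d: "distinct cs" and w: "walk_in V E wc"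
    using assms unfolding is_cycle_def by auto
  then have ne: "cs \<noteq> []" by auto
  show "walk_in V E wc" by (rule w)
  show "hd wc = last wc" "set wc = set cs" "walk_len wc = length cs"
    using ne by (auto simp: wc_def walk_len_def)
  have "{last cs, hd cs} \<notin> set (edge_list cs)"
  proof
    assume "{last cs, hd cs} \<in> set (edge_list cs)"
    then obtain i where "i < length (edge_list cs)" "{last cs, hd cs} = edge_list cs ! i"
      by (metis in_set_conv_nth)
    then have i: "Suc i < length cs" "{last cs, hd cs} = {cs ! i, cs ! Suc i}"
      by (simp_all add: length_edge_list nth_edge_list)
    have ends: "last cs = cs ! (length cs - 1)" "hd cs = cs ! 0"
      using ne by (simp_all add: last_conv_nth hd_conv_nth)
    have idx: "cs ! a = cs ! b \<Longrightarrow> a = b" if "a < length cs" "b < length cs" for a b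
      using nth_eq_iff_index_eq[OF d that] by blast
    \<comment> \<open>by distinctness, the consecutive positions i and i + 1 would be the last and the first\<close>
    from i(2) consider "last cs = cs ! i" | "hd cs = cs ! i" "last cs = cs ! Suc i"
      by (auto simp: doubleton_eq_iff)
    then show False
    proof cases
      case 1
      have "length cs - 1 = i" by (rule idx) (use 1 ends i(1) in auto)
      with i(1) show False by simp
    next
      case 2
      have "0 = i" "length cs - 1 = Suc i" by (rule idx; use 2 ends i(1) in auto)+
      with len show False by simp
    qed
  qed
  then show "distinct (edge_list wc)"
    using ne distinct_edge_list[OF d] by (simp add: wc_def edge_list_append_Cons)
qed

lemma girth_arc_edges_subset:
  assumes girth: "\<forall>cs. is_cycle V E cs \<longrightarrow> g \<le> length cs"
    and A: "walk_in V E A" "hd A = a" "last A = b" "distinct (edge_list A)"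
    and Ra: "walk_in V E Ra" "hd Ra = x" "last Ra = a"
    and Rb: "walk_in V E Rb" "hd Rb = x" "last Rb = b"
    and short: "walk_len A + walk_len Ra + walk_len Rb < g"
  shows "set (edge_list A) \<subseteq> set (edge_list Ra) \<union> set (edge_list Rb)"
proof
  fix e assume e: "e \<in> set (edge_list A)"
  have "last A = hd (rev Rb)" using A Rb by (simp add: hd_rev)
  note j1 = walk_join[OF A(1) walk_rev[OF Rb(1)] this]
  have "last (A @ tl (rev Rb)) = hd Ra" using j1(3) Ra Rb by (simp add: last_rev)
  note j2 = walk_join[OF j1(1) Ra(1) this]
  let ?Z = "(A @ tl (rev Rb)) @ tl Ra"
  have "walk_in V E ?Z" "hd ?Z = last ?Z" "walk_len ?Z < g"
    using j1 j2 A Ra short walk_len_rev[of Rb] by auto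
  moreover have "e \<in> set (edge_list ?Z)" using j2(4) j1(4) e by simp
  ultimately have "2 \<le> count_list (edge_list ?Z) e"
    by (rule closed_walk_below_girth_edges_twice[OF girth])
  moreover have "count_list (edge_list ?Z) e = 1 + count_list (edge_list Rb) e + count_list (edge_list Ra) e"
    using j2(4) j1(4) count_list_distinct[OF A(4) e] by (simp add: edge_list_rev)
  ultimately have "count_list (edge_list Ra) e \<noteq> 0 \<or> count_list (edge_list Rb) e \<noteq> 0"
    by linarith
  then show "e \<in> set (edge_list Ra) \<union> set (edge_list Rb)" by (auto simp: count_list_0_iff)
qed

lemma girth_cycle_edges_subset_radii:
  fixes c :: "'a list"
  defines "wc \<equiv> c @ [hd c]"
  assumes girth: "\<forall>cs. is_cycle V E cs \<longrightarrow> length c \<le> length cs" and c: "is_cycle V E c"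
    and ij: "i \<le> j" "j \<le> length c" "2 * i < length c" "2 * (j - i) < length c"
      "2 * (length c - j) < length c"
    and Ru: "walk_in V E Ru" "hd Ru = x" "last Ru = wc ! 0"
    and Rv: "walk_in V E Rv" "hd Rv = x" "last Rv = wc ! i"
    and Rw: "walk_in V E Rw" "hd Rw = x" "last Rw = wc ! j"
    and radii: "2 * (walk_len Ru + walk_len Rv + walk_len Rw) \<le> length c"
  shows "set (edge_list wc) \<subseteq> set (edge_list Ru) \<union> set (edge_list Rv) \<union> set (edge_list Rw)"
proof -
  let ?g = "length c"
  note cw = cycle_closed_walk[OF c, folded wc_def]
  have len: "length wc = Suc ?g" by (simp add: wc_def)
  have "wc ! ?g = wc ! 0" using cw(1,2,4) walk_hd_last_nth by metis
  \<comment> \<open>each of the three arcs closes up with two radii to a walk shorter than the girth\<close>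
  define A1 A2 A3 where "A1 = drop 0 (take (Suc i) wc)" and "A2 = drop i (take (Suc j) wc)"
    and "A3 = drop j (take (Suc ?g) wc)"
  have arcs: "edge_list wc = edge_list A1 @ edge_list A2 @ edge_list A3"
    using edge_list_three_arcs[of i j wc] ij len by (simp add: A1_def A2_def A3_def)
  then have d: "distinct (edge_list A1)" "distinct (edge_list A2)" "distinct (edge_list A3)"
    using cw(5) by auto
  note s1 = subwalk[OF cw(1), of 0 i, folded A1_def] and s2 = subwalk[OF cw(1), of i j, folded A2_def]
    and s3 = subwalk[OF cw(1), of j ?g, folded A3_def]
  have "set (edge_list A1) \<subseteq> set (edge_list Ru) \<union> set (edge_list Rv)"
    using girth_arc_edges_subset[OF _ s1(1) _ _ d(1) Ru Rv] girth radii s1 ij len by simp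
  moreover have "set (edge_list A2) \<subseteq> set (edge_list Rv) \<union> set (edge_list Rw)"
    using girth_arc_edges_subset[OF _ s2(1) _ _ d(2) Rv Rw] girth radii s2 ij len by simp
  moreover have "set (edge_list A3) \<subseteq> set (edge_list Rw) \<union> set (edge_list Ru)"
    using girth_arc_edges_subset[OF _ s3(1) _ _ d(3) Rw Ru] girth radii s3 ij len
      \<open>wc ! ?g = wc ! 0\<close> by simp
  ultimately show ?thesis using arcs by auto
qed

lemma girth_cycle_three_points_deficient:
  fixes c :: "'a list"
  defines "wc \<equiv> c @ [hd c]"
  assumes girth: "\<forall>cs. is_cycle V E cs \<longrightarrow> length c \<le> length cs" and c: "is_cycle V E c"
    and ij: "i \<le> j" "j \<le> length c" "2 * i < length c" "2 * (j - i) < length c"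
      "2 * (length c - j) < length c"
  shows "length c < 2 * steiner_dist V E {wc ! 0, wc ! i, wc ! j}"
proof (rule ccontr)
  let ?g = "length c"
  define u v w where "u = wc ! 0" and "v = wc ! i" and "w = wc ! j"
  assume "\<not> ?g < 2 * steiner_dist V E {wc ! 0, wc ! i, wc ! j}"
  then have le: "2 * steiner_dist V E {u, v, w} \<le> ?g" unfolding u_def v_def w_def by simp
  note cw = cycle_closed_walk[OF c, folded wc_def]
  have uvw: "u \<in> V" "v \<in> V" "w \<in> V"
    unfolding u_def v_def w_def using walk_nth_in_vertices[OF cw(1)] ij by (auto simp: wc_def)
  obtain x where x: "x \<in> V" "dist V E x u + dist V E x v + dist V E x w \<le> steiner_dist V E {u, v, w}"
    by (rule steiner_median[OF uvw])
  obtain Ru Rv Rw where R: "shortest_path V E x u Ru" "shortest_path V E x v Rv"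
    "shortest_path V E x w Rw"
    using shortest_path_exists[OF x(1)] uvw by metis
  note ru = shortest_pathD[OF R(1)] and rv = shortest_pathD[OF R(2)]
    and rw = shortest_pathD[OF R(3)]
  have radii: "2 * (walk_len Ru + walk_len Rv + walk_len Rw) \<le> ?g" using ru rv rw x(2) le by simp
  have lasts: "last Ru = (c @ [hd c]) ! 0" "last Rv = (c @ [hd c]) ! i"
    "last Rw = (c @ [hd c]) ! j"
    using ru(3) rv(3) rw(3) unfolding u_def v_def w_def wc_def by simp_all
  have "set (edge_list wc) \<subseteq> set (edge_list Ru) \<union> set (edge_list Rv) \<union> set (edge_list Rw)"
    using girth_cycle_edges_subset_radii[OF girth c ij ru(1,2) lasts(1) rv(1,2) lasts(2)
      rw(1,2) lasts(3) radii] unfolding wc_def .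
  then have "card (set (edge_list wc)) \<le>
      card (set (edge_list Ru)) + card (set (edge_list Rv)) + card (set (edge_list Rw))"
    by (meson card_Un_le card_mono finite_UnI finite_set le_trans add_le_mono1)
  also have "\<dots> \<le> walk_len Ru + walk_len Rv + walk_len Rw"
    using card_edges_le_walk_len[of Ru] card_edges_le_walk_len[of Rv] card_edges_le_walk_len[of Rw]
    by linarith
  finally have "?g \<le> walk_len Ru + walk_len Rv + walk_len Rw"
    using cw(4,5) by (simp add: distinct_card walk_len_eq_length_edge_list)
  then show False using radii c unfolding is_cycle_def by simp
qed

lemma non_tree_deficient_set:
  assumes "\<not> is_tree V E" "4 \<le> k" "k \<le> card V"
  obtains S where "S \<subseteq> V" "card S = k" "tsp V E S < 2 * steiner_dist V E S"
proof -
  obtain c0 where "is_cycle V E c0" using assms(1) connected unfolding is_tree_def by blast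
  then obtain c where c: "is_cycle V E c"
    and girth: "\<forall>cs. is_cycle V E cs \<longrightarrow> length c \<le> length cs"
    using ex_has_least_nat[of "is_cycle V E" c0 length] by blast
  define g where "g = length c"
  define wc where "wc = c @ [hd c]"
  note cw = cycle_closed_walk[OF c, folded wc_def]
  have g3: "3 \<le> g" and "distinct c" "set c \<subseteq> V"
    using c cw(1,3) unfolding is_cycle_def g_def by (auto simp: walk_in_def)
  then have card_c: "card (set c) = g" using g_def by (simp add: distinct_card)
  have short: "walk_len wc + 2 < 2 * card (set wc)" using cw(3,4) card_c g3 g_def by simp
  show ?thesis
  proof (cases "g \<le> k")
    case True
    have "g \<le> steiner_dist V E (set c) + 1"
      using card_le_Suc_steiner_dist[OF \<open>set c \<subseteq> V\<close>] card_c by simp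
    then have "walk_len wc < 2 * steiner_dist V E (set c)" using cw(4) g3 g_def by simp
    moreover have "set c \<subseteq> set wc" "card (set c) \<le> k" using cw(3) card_c True by simp_all
    ultimately obtain S where "S \<subseteq> V" "card S = k" "tsp V E S < 2 * steiner_dist V E S"
      using deficient_set_of_card[OF cw(1,2) _ _ assms(3) _ short] by blast
    then show ?thesis by (rule that)
  next
    case False
    \<comment> \<open>three vertices splitting the shortest cycle into arcs shorter than half of it\<close>
    define i j where "i = g div 3" and "j = 2 * g div 3"
    have ij: "i \<le> j" "j \<le> g" "2 * i < g" "2 * (j - i) < g" "2 * (g - j) < g"
      using False assms(2) unfolding i_def j_def by linarith+
    let ?X = "{wc ! 0, wc ! i, wc ! j}"
    have "length wc = Suc g" unfolding wc_def using g_def by simp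
    then have "?X \<subseteq> set wc" using ij by (auto intro!: nth_mem)
    moreover have "card ?X \<le> k" using card_length[of "[wc ! 0, wc ! i, wc ! j]"] assms(2) by simp
    moreover have "walk_len wc < 2 * steiner_dist V E ?X"
      using girth_cycle_three_points_deficient[OF girth c ij[unfolded g_def], folded wc_def]
        cw(4) g_def by simp
    ultimately obtain S where "S \<subseteq> V" "card S = k" "tsp V E S < 2 * steiner_dist V E S"
      using deficient_set_of_card[OF cw(1,2) _ _ assms(3) _ short] by blast
    then show ?thesis by (rule that)
  qed
qed

lemma tsp_eq_twice_steiner_dist_iff_tree:
  assumes "4 \<le> k" "k \<le> card V"
  shows "(\<forall>S\<in>{S. S \<subseteq> V \<and> card S = k}. tsp V E S = 2 * steiner_dist V E S) \<longleftrightarrow> is_tree V E"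
proof
  assume all: "\<forall>S\<in>{S. S \<subseteq> V \<and> card S = k}. tsp V E S = 2 * steiner_dist V E S"
  show "is_tree V E"
  proof (rule ccontr)
    assume "\<not> is_tree V E"
    then obtain S where "S \<subseteq> V" "card S = k" "tsp V E S < 2 * steiner_dist V E S"
      by (rule non_tree_deficient_set[OF _ assms])
    then show False using all by auto
  qed
next
  assume "is_tree V E"
  then show "\<forall>S\<in>{S. S \<subseteq> V \<and> card S = k}. tsp V E S = 2 * steiner_dist V E S"
    using acyclic_tsp_eq_twice_steiner_dist unfolding is_tree_def by blast
qed

end

theorem theorem1:
  fixes V :: "'a set" and E :: "'a set set" and n k :: nat
  assumes "simple_graph V E" and "connected_graph V E" and "card V = n"
    and "2 \<le> k" and "k \<le> n"
  shows "W_tsp V E k \<le> 2 * W_steiner V E k \<and>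
    (W_tsp V E k = 2 * W_steiner V E k \<longleftrightarrow>
      (k = 2 \<or>
       (k = 3 \<and> \<not> (\<exists>u\<in>V. \<exists>v\<in>V. \<exists>w\<in>V.
          2 * max (dist V E u v) (max (dist V E u w) (dist V E v w))
            < dist V E u v + dist V E u w + dist V E v w \<and>
          (\<forall>P1 P2 P3. shortest_path V E u v P1 \<and> shortest_path V E v w P2 \<and>
              shortest_path V E w u P3 \<longrightarrow>
             walk_edges P1 \<inter> walk_edges P2 = {} \<and> walk_edges P2 \<inter> walk_edges P3 = {} \<and>
             walk_edges P1 \<inter> walk_edges P3 = {}))) \<or>
       (4 \<le> k \<and> is_tree V E)))"
proof -
  interpret connected_simple_graph V E using assms(1,2) by unfold_locales
  consider "k = 2" | "k = 3" | "4 \<le> k" using assms(4) by linarith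
  then have "W_tsp V E k = 2 * W_steiner V E k \<longleftrightarrow>
      (k = 2 \<or> (k = 3 \<and> \<not> (\<exists>u\<in>V. \<exists>v\<in>V. \<exists>w\<in>V. disjoint_geodesic_triangle u v w)) \<or>
       (4 \<le> k \<and> is_tree V E))"
  proof cases
    case 1
    then show ?thesis using W_tsp_eq_twice_W_steiner_iff tsp_eq_twice_steiner_dist_card_2 by simp
  next
    case 2
    then show ?thesis using W_tsp_eq_twice_W_steiner_iff tsp_eq_twice_steiner_dist_card_3_iff
      by simp
  next
    case 3
    then show ?thesis
      using W_tsp_eq_twice_W_steiner_iff tsp_eq_twice_steiner_dist_iff_tree[OF 3] assms(3,5)
      by simp
  qed
  then show ?thesis
    using W_tsp_le_twice_W_steiner unfolding disjoint_geodesic_triangle_def by blast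
qed

end
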